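(* Let $n\ge1$, $\boldsymbol z\in\{0,1\}^n$ and $\boldsymbol y,\boldsymbol y'\in\overline{\mathbb R}^n$ with $y_i\le y_i'$ whenever $z_i=1$ and $y_i\ge y_i'$ whenever $z_i=0$. Then for the Mann–Whitney-type statistic, $t_{\mathrm R,\phi}(\boldsymbol z,\boldsymbol y)\le t_{\mathrm R,\phi}(\boldsymbol z,\boldsymbol y')$.
   Context: $\overline{\mathbb R}=\mathbb R\cup\{\pm\infty\}$. For $1\le i,j\le n$ and $y,y'\in\overline{\mathbb R}$, $\psi_{i,j}(y,y')=\mathbf 1\{y>y'\}+\mathbf 1\{y=y'\}\mathbf 1\{i\ge j\}$. $\phi$ is a fixed nondecreasing real function on the nonnegative integers. Mann–Whitney-type statistic: $t_{\mathrm R,\phi}(\boldsymbol z,\boldsymbol y)=\sum_{i=1}^nz_i\phi\big(\sum_{j=1}^n(1-z_j)\psi_{i,j}(y_i,y_j)\big)$. *)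

theory Defs
  imports "HOL-Analysis.Analysis" "HOL-Library.Extended_Real"
begin

definition psi :: "nat \<Rightarrow> nat \<Rightarrow> ereal \<Rightarrow> ereal \<Rightarrow> nat" where
  "psi i j y y' = (if y > y' then 1 else 0) + (if y = y' \<and> i \<ge> j then 1 else 0)"

definition t_R :: "(nat \<Rightarrow> real) \<Rightarrow> nat \<Rightarrow> (nat \<Rightarrow> nat) \<Rightarrow> (nat \<Rightarrow> ereal) \<Rightarrow> real" where
  "t_R \<phi> n z y = (\<Sum>i=1..n. real (z i) * \<phi> (\<Sum>j=1..n. (1 - z j) * psi i j (y i) (y j)))"

end

theory Submission
  imports Defs
begin

text \<open>Each summand of the statistic applies \<open>\<phi>\<close> to the number of control units that a treated
unit beats (ties broken by index). Raising treated outcomes and lowering control outcomes can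
only increase each such count, and \<open>\<phi>\<close> is nondecreasing.\<close>

lemma psi_mono:
  assumes "a \<le> a'" "b' \<le> b"
  shows "psi i j a b \<le> psi i j a' b'"
proof -
  have "a > b \<Longrightarrow> a' > b'" using assms by (meson le_less_trans less_le_trans)
  moreover have "a = b \<Longrightarrow> a' \<ge> b'" using assms by auto
  ultimately show ?thesis unfolding psi_def by (auto simp: not_less)
qed

lemma control_count_mono:
  fixes z :: "nat \<Rightarrow> nat" and y y' :: "nat \<Rightarrow> ereal"
  assumes "y i \<le> y' i"
    and "\<forall>j\<in>{1..n}. z j = 0 \<longrightarrow> y' j \<le> y j"
  shows "(\<Sum>j=1..n. (1 - z j) * psi i j (y i) (y j)) \<le> (\<Sum>j=1..n. (1 - z j) * psi i j (y' i) (y' j))"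
proof (rule sum_mono)
  fix j assume "j \<in> {1..n}"
  show "(1 - z j) * psi i j (y i) (y j) \<le> (1 - z j) * psi i j (y' i) (y' j)"
  proof (cases "z j = 0")
    case True
    then show ?thesis using psi_mono assms \<open>j \<in> {1..n}\<close> by simp
  next
    case False
    then show ?thesis by simp
  qed
qed

theorem lemma5:
  fixes n :: nat and \<phi> :: "nat \<Rightarrow> real" and z :: "nat \<Rightarrow> nat" and y y' :: "nat \<Rightarrow> ereal"
  assumes "n \<ge> 1"
    and "mono \<phi>"
    and "\<forall>i\<in>{1..n}. z i \<in> {0, 1}"
    and "\<forall>i\<in>{1..n}. z i = 1 \<longrightarrow> y i \<le> y' i"
    and "\<forall>i\<in>{1..n}. z i = 0 \<longrightarrow> y i \<ge> y' i"
  shows "t_R \<phi> n z y \<le> t_R \<phi> n z y'"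
  unfolding t_R_def
proof (rule sum_mono)
  fix i assume i: "i \<in> {1..n}"
  consider "z i = 0" | "z i = 1" using bspec[OF assms(3) i] by auto
  then show "real (z i) * \<phi> (\<Sum>j=1..n. (1 - z j) * psi i j (y i) (y j))
     \<le> real (z i) * \<phi> (\<Sum>j=1..n. (1 - z j) * psi i j (y' i) (y' j))"
  proof cases
    case 1
    then show ?thesis by simp
  next
    case 2
    then have "y i \<le> y' i" using assms(4) i by blast
    from this assms(5) have "(\<Sum>j=1..n. (1 - z j) * psi i j (y i) (y j))
        \<le> (\<Sum>j=1..n. (1 - z j) * psi i j (y' i) (y' j))"
      by (rule control_count_mono)
    then show ?thesis using 2 assms(2) by (simp add: monoD)
  qed
qed

end
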